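(* Let $\mathcal D$ be universal, $\mathrm M=(M,d)\in\mathfrak U_{\mathcal D}$, $A\subseteq M$ finite, and $\mathfrak p_0,\mathfrak p_1,\mathfrak p_2$ Katětov functions of $\mathrm M$ with domain $A$. Then $d_{\min}(\mathfrak p_1,\mathfrak p_2)\le d_{\min}(\mathfrak p_0,\mathfrak p_1)+d_{\min}(\mathfrak p_0,\mathfrak p_2)$.
   Context: $\mathcal D$ is a finite subset of $\mathbb R_{\ge0}$ containing $0$. $\mathfrak U_{\mathcal D}$ is the class of countable homogeneous metric spaces (every isometry between finite subspaces extends to an isometry of the space onto itself) with distance set exactly $\mathcal D$ into which every finite metric space with distances in $\mathcal D$ embeds isometrically; $\mathcal D$ is universal if this class is nonempty. A Katětov function of $\mathrm M$ is a map $\mathfrak t:F\to\mathcal D\setminus\{0\}$, $F\subseteq M$ finite, with $|\mathfrak t(x)-\mathfrak t(y)|\le d(x,y)\le\mathfrak t(x)+\mathfrak t(y)$ for all $x,y\in F$; $\operatorname{orb}(\mathfrak t)=\{y\in M\setminus F: d(y,x)=\mathfrak t(x)\ \forall x\in F\}$. $d_{\min}(\mathfrak s,\mathfrak t)=\min\{d(x,y):x\in\operatorname{orb}(\mathfrak s),y\in\operatorname{orb}(\mathfrak t)\}$. *)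

theory Defs
  imports Complex_Main "HOL-Library.Countable_Set"
begin

definition metric_on :: "'a set \<Rightarrow> ('a \<Rightarrow> 'a \<Rightarrow> real) \<Rightarrow> bool" where
  "metric_on M d \<longleftrightarrow>
     (\<forall>x\<in>M. \<forall>y\<in>M. d x y \<ge> 0 \<and> (d x y = 0 \<longleftrightarrow> x = y) \<and> d x y = d y x) \<and>
     (\<forall>x\<in>M. \<forall>y\<in>M. \<forall>z\<in>M. d x z \<le> d x y + d y z)"

definition dist_set :: "'a set \<Rightarrow> ('a \<Rightarrow> 'a \<Rightarrow> real) \<Rightarrow> real set" where
  "dist_set M d = {d x y | x y. x \<in> M \<and> y \<in> M}"

definition isometry_betw :: "('a \<Rightarrow> 'a \<Rightarrow> real) \<Rightarrow> ('b \<Rightarrow> 'b \<Rightarrow> real) \<Rightarrow> ('a \<Rightarrow> 'b) \<Rightarrow> 'a set \<Rightarrow> 'b set \<Rightarrow> bool" where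
  "isometry_betw d e f A B \<longleftrightarrow> bij_betw f A B \<and> (\<forall>x\<in>A. \<forall>y\<in>A. e (f x) (f y) = d x y)"

definition homogeneous :: "'a set \<Rightarrow> ('a \<Rightarrow> 'a \<Rightarrow> real) \<Rightarrow> bool" where
  "homogeneous M d \<longleftrightarrow>
     (\<forall>A B f. A \<subseteq> M \<and> B \<subseteq> M \<and> finite A \<and> finite B \<and> isometry_betw d d f A B \<longrightarrow>
        (\<exists>g. isometry_betw d d g M M \<and> (\<forall>x\<in>A. g x = f x)))"

text \<open>Every finite metric space with distances in D embeds isometrically.
  Finite metric spaces are represented (up to isometry) on finite subsets of nat.\<close>
definition embeds_all_finite :: "real set \<Rightarrow> 'a set \<Rightarrow> ('a \<Rightarrow> 'a \<Rightarrow> real) \<Rightarrow> bool" where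
  "embeds_all_finite D M d \<longleftrightarrow>
     (\<forall>(F::nat set) e. finite F \<and> metric_on F e \<and> dist_set F e \<subseteq> D \<longrightarrow>
        (\<exists>f. inj_on f F \<and> f ` F \<subseteq> M \<and> (\<forall>x\<in>F. \<forall>y\<in>F. d (f x) (f y) = e x y)))"

definition in_U :: "real set \<Rightarrow> 'a set \<Rightarrow> ('a \<Rightarrow> 'a \<Rightarrow> real) \<Rightarrow> bool" where
  "in_U D M d \<longleftrightarrow> countable M \<and> metric_on M d \<and> homogeneous M d \<and>
     dist_set M d = D \<and> embeds_all_finite D M d"

definition universal_dist_set :: "real set \<Rightarrow> bool" where
  "universal_dist_set D \<longleftrightarrow> (\<exists>(M::nat set) d. in_U D M d)"

text \<open>Katetov function with domain F (values outside F irrelevant).\<close>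
definition katetov :: "real set \<Rightarrow> 'a set \<Rightarrow> ('a \<Rightarrow> 'a \<Rightarrow> real) \<Rightarrow> 'a set \<Rightarrow> ('a \<Rightarrow> real) \<Rightarrow> bool" where
  "katetov D M d F t \<longleftrightarrow> F \<subseteq> M \<and> finite F \<and> (\<forall>x\<in>F. t x \<in> D - {0}) \<and>
     (\<forall>x\<in>F. \<forall>y\<in>F. \<bar>t x - t y\<bar> \<le> d x y \<and> d x y \<le> t x + t y)"

definition orb :: "'a set \<Rightarrow> ('a \<Rightarrow> 'a \<Rightarrow> real) \<Rightarrow> 'a set \<Rightarrow> ('a \<Rightarrow> real) \<Rightarrow> 'a set" where
  "orb M d F t = {y \<in> M - F. \<forall>x\<in>F. d y x = t x}"

definition d_min :: "'a set \<Rightarrow> ('a \<Rightarrow> 'a \<Rightarrow> real) \<Rightarrow> 'a set \<Rightarrow> ('a \<Rightarrow> real) \<Rightarrow> ('a \<Rightarrow> real) \<Rightarrow> real" where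
  "d_min M d F s t = Min {d x y | x y. x \<in> orb M d F s \<and> y \<in> orb M d F t}"

end

theory Submission
  imports Defs
begin

(* Take points x0 \<in> orb p0, x1 \<in> orb p1 realising d_min p0 p1 and
   y0 \<in> orb p0, y2 \<in> orb p2 realising d_min p0 p2.  Since x0 and y0 realise the same
   Katetov function over A, the map fixing A and sending y0 to x0 is a finite partial
   isometry, so by homogeneity it extends to an isometry g of M.  Then g y2 lies again
   in orb p2, d x0 (g y2) = d y0 y2, and the triangle inequality for x1, x0, g y2 gives
   the claim. *)

lemma metric_onD:
  assumes "metric_on M d" and "x \<in> M" and "y \<in> M"
  shows "d x y = d y x" and "d x x = 0" and "\<And>z. z \<in> M \<Longrightarrow> d x z \<le> d x y + d y z"
  using assms unfolding metric_on_def by auto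

lemma metric_on_subset: "metric_on M d \<Longrightarrow> A \<subseteq> M \<Longrightarrow> metric_on A d"
  unfolding metric_on_def by blast

(* Katetov functions are positive on their domain (the value 0 is excluded, and
   d x x \<le> 2 p x rules out negative values). *)
lemma katetov_pos:
  assumes "metric_on M d" and "katetov D M d A p" and "x \<in> A"
  shows "p x > 0"
proof -
  have "x \<in> M" and "p x \<noteq> 0" using assms(2,3) unfolding katetov_def by auto
  have "d x x \<le> p x + p x" using assms(2,3) unfolding katetov_def by blast
  moreover have "d x x = 0" using metric_onD(2)[OF assms(1) \<open>x \<in> M\<close> \<open>x \<in> M\<close>] .
  ultimately show ?thesis using \<open>p x \<noteq> 0\<close> by linarith
qed

(* The embedding property is stated for spaces on finite subsets of nat; it transfers to
   finite metric spaces on an arbitrary type by enumerating the carrier. *)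
lemma embeds_finite_space:
  fixes X :: "'b set" and e :: "'b \<Rightarrow> 'b \<Rightarrow> real"
  assumes emb: "embeds_all_finite D M d" and X: "finite X"
    and met: "metric_on X e" and dist: "dist_set X e \<subseteq> D"
  obtains f where "inj_on f X" and "f ` X \<subseteq> M" and "\<forall>x\<in>X. \<forall>y\<in>X. d (f x) (f y) = e x y"
proof -
  obtain h where h: "bij_betw h {0..<card X} X" using ex_bij_betw_nat_finite[OF X] by blast
  define N where "N = {0..<card X}"
  define e' where "e' = (\<lambda>i j. e (h i) (h j))"
  have hN: "h ` N = X" and hinj: "inj_on h N" using h unfolding N_def bij_betw_def by auto
  have "metric_on N e'"
    using met hN hinj unfolding metric_on_def e'_def inj_on_def by (auto simp: image_subset_iff)
  moreover have "dist_set N e' \<subseteq> D"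
    using dist hN unfolding dist_set_def e'_def by auto
  ultimately obtain f' where f'inj: "inj_on f' N" and f'M: "f' ` N \<subseteq> M"
    and f'd: "\<forall>i\<in>N. \<forall>j\<in>N. d (f' i) (f' j) = e' i j"
    using emb unfolding embeds_all_finite_def N_def by blast
  define k where "k = inv_into N h"
  have k: "bij_betw k X N" using bij_betw_inv_into[OF h] unfolding k_def N_def .
  have hk: "\<And>x. x \<in> X \<Longrightarrow> h (k x) = x" using hN unfolding k_def by (auto simp: f_inv_into_f)
  show ?thesis
  proof
    show "inj_on (f' \<circ> k) X"
      using comp_inj_on[OF bij_betw_imp_inj_on[OF k]] f'inj k by (simp add: bij_betw_def)
    show "(f' \<circ> k) ` X \<subseteq> M" using f'M k by (auto simp: bij_betw_def)
    show "\<forall>x\<in>X. \<forall>y\<in>X. d ((f' \<circ> k) x) ((f' \<circ> k) y) = e x y"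
      using f'd k hk unfolding e'_def by (auto simp: bij_betw_def)
  qed
qed

(* The one-point extension of a space by a new point None at distances p from the
   old points Some x: the abstract space realised by any point of orb p. *)
fun katetov_ext :: "('a \<Rightarrow> 'a \<Rightarrow> real) \<Rightarrow> ('a \<Rightarrow> real) \<Rightarrow> 'a option \<Rightarrow> 'a option \<Rightarrow> real" where
  "katetov_ext d p None None = 0"
| "katetov_ext d p None (Some y) = p y"
| "katetov_ext d p (Some x) None = p x"
| "katetov_ext d p (Some x) (Some y) = d x y"

lemma katetov_ext_metric:
  assumes met: "metric_on A d" and pos: "\<forall>x\<in>A. p x > 0"
    and kat: "\<forall>x\<in>A. \<forall>y\<in>A. \<bar>p x - p y\<bar> \<le> d x y \<and> d x y \<le> p x + p y"
  shows "metric_on (insert None (Some ` A)) (katetov_ext d p)"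
  unfolding metric_on_def
proof (intro conjI ballI)
  fix u v assume "u \<in> insert None (Some ` A)" "v \<in> insert None (Some ` A)"
  then show "katetov_ext d p u v \<ge> 0" and "katetov_ext d p u v = 0 \<longleftrightarrow> u = v"
    and "katetov_ext d p u v = katetov_ext d p v u"
    using met pos unfolding metric_on_def by (auto simp: less_imp_le)
next
  fix u v w assume "u \<in> insert None (Some ` A)" "v \<in> insert None (Some ` A)"
    "w \<in> insert None (Some ` A)"
  then consider "u = None" "v = None" | x where "u = None" "v = Some x" "x \<in> A"
    | x where "u = Some x" "v = None" "x \<in> A"
    | x y where "u = Some x" "v = Some y" "x \<in> A" "y \<in> A"
    by blast
  then show "katetov_ext d p u w \<le> katetov_ext d p u v + katetov_ext d p v w"
  proof cases
    case (2 x)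
    have "p z \<le> p x + d x z" if "z \<in> A" for z
      using kat \<open>x \<in> A\<close> that by (fastforce simp: abs_le_iff)
    then show ?thesis using 2 \<open>w \<in> _\<close> pos by (cases w) (auto simp: less_imp_le)
  next
    case (3 x)
    then show ?thesis using \<open>w \<in> _\<close> met pos kat unfolding metric_on_def
      by (cases w) (auto simp: less_imp_le)
  next
    case (4 x y)
    have "p x \<le> d x y + p y" using kat 4 by (fastforce simp: abs_le_iff)
    then show ?thesis using 4 \<open>w \<in> _\<close> met unfolding metric_on_def by (cases w) auto
  qed (use \<open>w \<in> _\<close> pos in \<open>cases w; auto simp: less_imp_le\<close>)
qed

lemma katetov_ext_dist_set:
  "dist_set (insert None (Some ` A)) (katetov_ext d p) \<subseteq> insert 0 (dist_set A d \<union> p ` A)"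
  unfolding dist_set_def by auto

lemma isometry_into_orb:
  assumes g: "isometry_betw d d g M M" and B: "B \<subseteq> M" and gB: "g ` B = A"
    and z: "z \<in> M" "z \<notin> B" and dz: "\<forall>b\<in>B. d z b = p (g b)"
  shows "g z \<in> orb M d A p"
proof -
  have inj: "inj_on g M" and gM: "g ` M = M" and gd: "\<forall>x\<in>M. \<forall>y\<in>M. d (g x) (g y) = d x y"
    using g unfolding isometry_betw_def bij_betw_def by auto
  have "g z \<notin> A" using inj z B gB by (auto simp: inj_on_def)
  moreover have "d (g z) a = p a" if "a \<in> A" for a
    using that gB B gd z dz by auto
  ultimately show ?thesis using gM z unfolding orb_def by auto
qed

(* In a space of U_D every Katetov function is realised: embed the one-point extension
   of A by universality, then move the copy of A back onto A by homogeneity. *)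
lemma orb_nonempty:
  assumes U: "in_U D M d" and z0: "0 \<in> D" and K: "katetov D M d A p"
  shows "orb M d A p \<noteq> {}"
proof -
  have met: "metric_on M d" and hom: "homogeneous M d" and ds: "dist_set M d = D"
    and emb: "embeds_all_finite D M d" using U unfolding in_U_def by auto
  have AM: "A \<subseteq> M" and fA: "finite A" and pD: "p ` A \<subseteq> D"
    and kat: "\<forall>x\<in>A. \<forall>y\<in>A. \<bar>p x - p y\<bar> \<le> d x y \<and> d x y \<le> p x + p y"
    using K unfolding katetov_def by auto
  have pos: "\<forall>x\<in>A. p x > 0" using katetov_pos[OF met K] by blast
  have dA: "dist_set A d \<subseteq> D" using ds AM unfolding dist_set_def by blast
  let ?X = "insert None (Some ` A)"
  have "metric_on ?X (katetov_ext d p)"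
    using katetov_ext_metric[OF metric_on_subset[OF met AM] pos kat] .
  moreover have "dist_set ?X (katetov_ext d p) \<subseteq> D"
    using katetov_ext_dist_set[of A d p] z0 pD dA by blast
  ultimately obtain f where finj: "inj_on f ?X" and fM: "f ` ?X \<subseteq> M"
    and fd: "\<forall>u\<in>?X. \<forall>v\<in>?X. d (f u) (f v) = katetov_ext d p u v"
    using embeds_finite_space[OF emb] fA by blast
  define B where "B = f ` Some ` A"
  define \<phi> where "\<phi> = inv_into A (f \<circ> Some)"
  have fSome: "bij_betw (f \<circ> Some) A B"
    using finj unfolding B_def bij_betw_def inj_on_def by auto
  have \<phi>: "bij_betw \<phi> B A" using bij_betw_inv_into[OF fSome] unfolding \<phi>_def .
  have \<phi>f: "\<And>a. a \<in> A \<Longrightarrow> \<phi> (f (Some a)) = a"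
    using fSome unfolding \<phi>_def bij_betw_def by (metis comp_apply inv_into_f_f)
  have BM: "B \<subseteq> M" using fM unfolding B_def by auto
  have "isometry_betw d d \<phi> B A"
    using \<phi> \<phi>f fd unfolding isometry_betw_def B_def by auto
  moreover have "finite B" using fA unfolding B_def by blast
  ultimately obtain g where g: "isometry_betw d d g M M" and g\<phi>: "\<forall>x\<in>B. g x = \<phi> x"
    using hom[unfolded homogeneous_def, rule_format, of B A \<phi>] BM AM fA by blast
  have "g ` B = A" using g\<phi> \<phi> by (simp add: bij_betw_def)
  moreover have "f None \<in> M" using fM by blast
  moreover have "f None \<notin> B" using finj unfolding B_def inj_on_def by auto
  moreover have "\<forall>b\<in>B. d (f None) b = p (g b)"
    using fd g\<phi> \<phi>f unfolding B_def by auto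
  ultimately have "g (f None) \<in> orb M d A p" by (rule isometry_into_orb[OF g BM])
  then show ?thesis by blast
qed

lemma orb_transitive:
  assumes met: "metric_on M d" and hom: "homogeneous M d" and A: "A \<subseteq> M" "finite A"
    and x0: "x0 \<in> orb M d A p" and y0: "y0 \<in> orb M d A p"
  obtains g where "isometry_betw d d g M M" and "\<forall>a\<in>A. g a = a" and "g y0 = x0"
proof -
  define f where "f = (\<lambda>x. if x = y0 then x0 else x)"
  have x0': "x0 \<in> M" "x0 \<notin> A" "\<forall>a\<in>A. d x0 a = p a"
    and y0': "y0 \<in> M" "y0 \<notin> A" "\<forall>a\<in>A. d y0 a = p a"
    using x0 y0 unfolding orb_def by auto
  have "isometry_betw d d f (insert y0 A) (insert x0 A)"
    unfolding isometry_betw_def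
  proof (intro conjI ballI)
    show "bij_betw f (insert y0 A) (insert x0 A)"
      unfolding bij_betw_def inj_on_def f_def using x0' y0' by auto
    have "\<forall>a\<in>A. d a x0 = d a y0"
      using x0' y0' A metric_onD(1)[OF met] by (metis subsetD)
    moreover have "d x0 x0 = d y0 y0" using metric_onD(2)[OF met] x0' y0' by metis
    moreover fix x y assume "x \<in> insert y0 A" "y \<in> insert y0 A"
    ultimately show "d (f x) (f y) = d x y"
      using x0' y0' unfolding f_def by auto
  qed
  moreover have "insert y0 A \<subseteq> M" "insert x0 A \<subseteq> M" using A x0' y0' by auto
  ultimately obtain g where "isometry_betw d d g M M" and "\<forall>x\<in>insert y0 A. g x = f x"
    using hom[unfolded homogeneous_def, rule_format, of "insert y0 A" "insert x0 A" f] A(2)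
    by blast
  then show ?thesis using that y0' unfolding f_def by auto
qed

lemma isometry_fixing_orb:
  assumes "isometry_betw d d g M M" and "A \<subseteq> M" and "\<forall>a\<in>A. g a = a"
    and "y \<in> orb M d A p"
  shows "g y \<in> orb M d A p"
  using assms isometry_into_orb[of d g M A A y p] unfolding orb_def by auto

lemma d_min_le:
  assumes "finite (dist_set M d)" and "x \<in> orb M d A s" and "y \<in> orb M d A t"
  shows "d_min M d A s t \<le> d x y"
proof -
  have "{d x y | x y. x \<in> orb M d A s \<and> y \<in> orb M d A t} \<subseteq> dist_set M d"
    unfolding dist_set_def orb_def by auto
  then show ?thesis
    unfolding d_min_def using assms by (blast intro: Min_le finite_subset)
qed

lemma d_min_attained:
  assumes "finite (dist_set M d)" and "orb M d A s \<noteq> {}" and "orb M d A t \<noteq> {}"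
  obtains x y where "x \<in> orb M d A s" and "y \<in> orb M d A t" and "d x y = d_min M d A s t"
proof -
  let ?S = "{d x y | x y. x \<in> orb M d A s \<and> y \<in> orb M d A t}"
  have "?S \<subseteq> dist_set M d" unfolding dist_set_def orb_def by auto
  then have "finite ?S" using assms(1) by (rule finite_subset)
  moreover have "?S \<noteq> {}" using assms(2,3) by blast
  ultimately have "d_min M d A s t \<in> ?S" unfolding d_min_def by (rule Min_in)
  then show ?thesis using that by auto
qed

theorem lemma6p1:
  fixes D :: "real set" and M :: "'a set" and d :: "'a \<Rightarrow> 'a \<Rightarrow> real"
    and A :: "'a set" and p0 p1 p2 :: "'a \<Rightarrow> real"
  assumes "finite D" and "D \<subseteq> {0..}" and "0 \<in> D"
    and "universal_dist_set D"
    and "in_U D M d"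
    and "A \<subseteq> M" and "finite A"
    and "katetov D M d A p0" and "katetov D M d A p1" and "katetov D M d A p2"
  shows "d_min M d A p1 p2 \<le> d_min M d A p0 p1 + d_min M d A p0 p2"
proof -
  have met: "metric_on M d" and hom: "homogeneous M d" and fin: "finite (dist_set M d)"
    using assms(1,5) unfolding in_U_def by auto
  have orbs: "orb M d A p0 \<noteq> {}" "orb M d A p1 \<noteq> {}" "orb M d A p2 \<noteq> {}"
    using orb_nonempty[OF assms(5,3)] assms(8-10) by auto
  obtain x0 x1 where x0: "x0 \<in> orb M d A p0" and x1: "x1 \<in> orb M d A p1"
    and dx: "d x0 x1 = d_min M d A p0 p1"
    using d_min_attained[OF fin orbs(1,2)] .
  obtain y0 y2 where y0: "y0 \<in> orb M d A p0" and y2: "y2 \<in> orb M d A p2"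
    and dy: "d y0 y2 = d_min M d A p0 p2"
    using d_min_attained[OF fin orbs(1,3)] .
  obtain g where g: "isometry_betw d d g M M" and gA: "\<forall>a\<in>A. g a = a" and gy0: "g y0 = x0"
    using orb_transitive[OF met hom assms(6,7) x0 y0] .
  have gy2: "g y2 \<in> orb M d A p2" using isometry_fixing_orb[OF g assms(6) gA y2] .
  have inM: "x0 \<in> M" "x1 \<in> M" "y0 \<in> M" "y2 \<in> M" "g y2 \<in> M"
    using x0 x1 y0 y2 gy2 unfolding orb_def by auto
  have "d_min M d A p1 p2 \<le> d x1 (g y2)" using d_min_le[OF fin x1 gy2] .
  also have "\<dots> \<le> d x1 x0 + d x0 (g y2)" using metric_onD(3)[OF met inM(2,1,5)] .
  also have "d x0 (g y2) = d y0 y2"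
    using g inM(3,4) gy0 unfolding isometry_betw_def by auto
  finally show ?thesis using dx dy metric_onD(1)[OF met inM(1,2)] by linarith
qed

end
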